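(* Let $G$ be a finite simple graph, $\alpha=\alpha(G)$, $g_j$ the number of independent sets of $G$ of size $j$ ($1\le j\le \alpha$), and $g=\sum_{j=1}^{\alpha}(-1)^{j-1}g_j$. For $0\le s\le \alpha-1$ set $D_s=\sum_{j=s+1}^{\alpha}(-1)^{j-1-s}g_j\binom{j}{j-1-s}$. If $g=1$, then $\deg h_{R/I(G)}(t)=\alpha-d'-1$, where $d'=\min\{s: 0\le s\le\alpha-1,\ D_s\neq 0\}$.
   Context: An independent set of $G$ is a set of pairwise non-adjacent vertices; $\alpha(G)$ is the maximum size of one. For $G$ on vertices $x_1,\dots,x_n$, $R=k[x_1,\dots,x_n]$ over a field $k$, $I(G)=(x_ix_j:\{x_i,x_j\}\in E(G))$, and $h_{R/I(G)}(t)$ is the numerator of the Hilbert series of $R/I(G)$ written as a reduced fraction $h_{R/I(G)}(t)/(1-t)^{\dim R/I(G)}$. *)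

theory Defs
  imports "HOL-Computational_Algebra.Computational_Algebra"
begin

definition simple_graph :: "'a set \<Rightarrow> ('a \<Rightarrow> 'a \<Rightarrow> bool) \<Rightarrow> bool" where
  "simple_graph V E \<longleftrightarrow> finite V \<and> (\<forall>u v. E u v \<longrightarrow> u \<in> V \<and> v \<in> V)
     \<and> (\<forall>u v. E u v \<longrightarrow> E v u) \<and> (\<forall>v. \<not> E v v)"

definition indep_set :: "'a set \<Rightarrow> ('a \<Rightarrow> 'a \<Rightarrow> bool) \<Rightarrow> 'a set \<Rightarrow> bool" where
  "indep_set V E S \<longleftrightarrow> S \<subseteq> V \<and> (\<forall>u\<in>S. \<forall>v\<in>S. \<not> E u v)"

definition indep_number :: "'a set \<Rightarrow> ('a \<Rightarrow> 'a \<Rightarrow> bool) \<Rightarrow> nat" where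
  "indep_number V E = Max (card ` {S. indep_set V E S})"

definition indep_count :: "'a set \<Rightarrow> ('a \<Rightarrow> 'a \<Rightarrow> bool) \<Rightarrow> nat \<Rightarrow> nat" where
  "indep_count V E j = card {S. indep_set V E S \<and> card S = j}"

text \<open>Monomials of R = k[x_v : v \<in> V] are exponent vectors m supported on V. Since I(G) is a monomial ideal, the monomials not in I(G)
  form a k-basis of R/I(G); hence the Hilbert function of R/I(G) in degree d is
  the number of degree-d monomials outside I(G) (independent of the field k).\<close>
definition standard_monomials :: "'a set \<Rightarrow> ('a \<Rightarrow> 'a \<Rightarrow> bool) \<Rightarrow> nat \<Rightarrow> ('a \<Rightarrow> nat) set" where
  "standard_monomials V E d = {m. (\<forall>v. v \<notin> V \<longrightarrow> m v = 0) \<and> (\<Sum>v\<in>V. m v) = d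
      \<and> \<not> (\<exists>u\<in>V. \<exists>v\<in>V. E u v \<and> m u \<ge> 1 \<and> m v \<ge> 1)}"

definition hilbert_function :: "'a set \<Rightarrow> ('a \<Rightarrow> 'a \<Rightarrow> bool) \<Rightarrow> nat \<Rightarrow> nat" where
  "hilbert_function V E d = card (standard_monomials V E d)"

definition hilbert_series :: "'a set \<Rightarrow> ('a \<Rightarrow> 'a \<Rightarrow> bool) \<Rightarrow> int fps" where
  "hilbert_series V E = Abs_fps (\<lambda>d. int (hilbert_function V E d))"

definition h_polynomial :: "'a set \<Rightarrow> ('a \<Rightarrow> 'a \<Rightarrow> bool) \<Rightarrow> int poly" where
  "h_polynomial V E = (THE p. \<exists>D::nat. hilbert_series V E * (1 - fps_X) ^ D = fps_of_poly p
        \<and> poly p 1 \<noteq> 0)"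

end

theory Submission
  imports Defs
begin

text \<open>Every monomial outside \<open>I(G)\<close> has an independent support \<open>S\<close>, and the monomials
  of exact support \<open>S\<close> have generating series \<open>(t/(1-t))^|S|\<close>. Hence
  \<open>h(t) = \<Sum>\<^sub>S t^|S| (1-t)^(\<alpha>-|S|)\<close>, a reduced numerator since \<open>h(1) = g\<^sub>\<alpha> > 0\<close>.
  In the variable \<open>u = 1 - t\<close> this is \<open>\<Sum>\<^sub>j g\<^sub>j u^(\<alpha>-j) (1-u)^j\<close>, whose coefficient of
  \<open>u^(\<alpha>-1-s)\<close> is \<open>D\<^sub>s\<close> and whose coefficient of \<open>u^\<alpha>\<close> is \<open>1 - g = 0\<close>.\<close>

definition exact_support_monomials :: "'a set \<Rightarrow> nat \<Rightarrow> ('a \<Rightarrow> nat) set" where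
  "exact_support_monomials S d =
     {m. (\<forall>v. v \<notin> S \<longrightarrow> m v = 0) \<and> (\<forall>v\<in>S. m v \<ge> 1) \<and> (\<Sum>v\<in>S. m v) = d}"

lemma finite_exact_support_monomials:
  assumes "finite S"
  shows "finite (exact_support_monomials S d)"
proof -
  have "exact_support_monomials S d \<subseteq> {f. \<forall>x. (x \<in> S \<longrightarrow> f x \<in> {0..d}) \<and> (x \<notin> S \<longrightarrow> f x = 0)}"
  proof (clarsimp simp: exact_support_monomials_def)
    fix m x assume "\<forall>v\<in>S. Suc 0 \<le> m v" "x \<in> S"
    then show "m x \<le> sum m S" using assms by (intro member_le_sum) auto
  qed
  then show ?thesis
    by (rule finite_subset) (intro finite_set_of_finite_funs assms, simp)
qed

lemma exact_support_monomials_empty: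
  "exact_support_monomials {} d = (if d = 0 then {\<lambda>_. 0} else {})"
  by (auto simp: exact_support_monomials_def)

lemma exact_support_monomials_insert:
  assumes "finite S" "a \<notin> S"
  shows "exact_support_monomials (insert a S) d =
    (\<Union>i\<in>{1..d}. (\<lambda>m. m(a := i)) ` exact_support_monomials S (d - i))"
proof (intro equalityI subsetI)
  fix m assume m: "m \<in> exact_support_monomials (insert a S) d"
  have "(\<Sum>v\<in>S. (m(a := 0)) v) = (\<Sum>v\<in>S. m v)" using assms by (intro sum.cong) auto
  moreover have "d = m a + (\<Sum>v\<in>S. m v)"
    using m assms by (simp add: exact_support_monomials_def)
  ultimately have "m(a := 0) \<in> exact_support_monomials S (d - m a)" "m a \<in> {1..d}"
    using m assms(2) by (auto simp: exact_support_monomials_def)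
  moreover have "m = (m(a := 0))(a := m a)" by simp
  ultimately show "m \<in> (\<Union>i\<in>{1..d}. (\<lambda>m. m(a := i)) ` exact_support_monomials S (d - i))"
    by blast
next
  fix m assume "m \<in> (\<Union>i\<in>{1..d}. (\<lambda>m. m(a := i)) ` exact_support_monomials S (d - i))"
  then obtain i m' where "i \<in> {1..d}" "m' \<in> exact_support_monomials S (d - i)" "m = m'(a := i)"
    by blast
  moreover from this have "(\<Sum>v\<in>S. m v) = (\<Sum>v\<in>S. m' v)" using assms by (intro sum.cong) auto
  ultimately show "m \<in> exact_support_monomials (insert a S) d"
    using assms by (auto simp: exact_support_monomials_def)
qed

lemma card_exact_support_monomials_insert:
  assumes "finite S" "a \<notin> S"
  shows "card (exact_support_monomials (insert a S) d) =
    (\<Sum>i=1..d. card (exact_support_monomials S (d - i)))"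
proof -
  have inj: "inj_on (\<lambda>m. m(a := i)) (exact_support_monomials S k)" for i k
  proof (rule inj_onI)
    fix x y assume "x \<in> exact_support_monomials S k" "y \<in> exact_support_monomials S k"
      and "x(a := i) = y(a := i)"
    moreover from this have "x a = y a" using assms(2) by (simp add: exact_support_monomials_def)
    ultimately show "x = y" by (metis fun_upd_triv fun_upd_upd)
  qed
  show ?thesis
    unfolding exact_support_monomials_insert[OF assms]
    by (subst card_UN_disjoint)
       (auto simp: card_image[OF inj] finite_exact_support_monomials[OF assms(1)]
             dest: fun_cong[where x = a])
qed

definition fps_pos_powers :: "'a::comm_ring_1 fps" where
  "fps_pos_powers = Abs_fps (\<lambda>n. if n = 0 then 0 else 1)"

lemma fps_pos_powers_times_one_minus_X: "fps_pos_powers * (1 - fps_X) = fps_X"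
proof -
  have "fps_pos_powers * (1 - fps_X) = fps_pos_powers - fps_X * fps_pos_powers"
    by (simp add: right_diff_distrib mult.commute)
  also have "\<dots> = fps_X"
    by (rule fps_ext) (auto simp: fps_pos_powers_def fps_X_nth split: nat.split)
  finally show ?thesis .
qed

lemma fps_card_exact_support_monomials:
  assumes "finite S"
  shows "Abs_fps (\<lambda>d. of_nat (card (exact_support_monomials S d))) =
    (fps_pos_powers ^ card S :: 'r::comm_ring_1 fps)"
  using assms
proof (induction S rule: finite_induct)
  case empty
  show ?case by (rule fps_ext) (simp add: exact_support_monomials_empty)
next
  case (insert a S)
  let ?F = "\<lambda>S. Abs_fps (\<lambda>d. of_nat (card (exact_support_monomials S d))) :: 'r fps"
  have "?F (insert a S) = fps_pos_powers * ?F S"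
  proof (rule fps_ext)
    fix d
    have "(fps_pos_powers * ?F S) $ d = (\<Sum>i=1..d. of_nat (card (exact_support_monomials S (d - i))))"
      by (simp add: fps_mult_nth fps_pos_powers_def sum.atLeast_Suc_atMost)
    also have "\<dots> = ?F (insert a S) $ d"
      by (simp add: card_exact_support_monomials_insert[OF insert(1,2)])
    finally show "?F (insert a S) $ d = (fps_pos_powers * ?F S) $ d" ..
  qed
  then show ?case using insert by simp
qed

lemma fps_of_poly_one_minus_X_power:
  "fps_of_poly ([:1, -1:] ^ n) = (1 - fps_X :: 'a::comm_ring_1 fps) ^ n"
  by (simp add: fps_of_poly_power fps_of_poly_pCons flip: fps_const_neg)

lemma order_one_minus_X_power: "order 1 ([:1, -1:] ^ n :: 'a::idom poly) = n"
proof -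
  have "[:1, -1:] ^ n = smult ((-1) ^ n) ([:-1, 1:] ^ n :: 'a poly)"
    by (simp flip: smult_power)
  then show ?thesis by (simp add: order_smult order_power_n_n)
qed

text \<open>The numerator of a rational series with denominator a power of \<open>1 - t\<close> is unique once
  it does not vanish at \<open>1\<close>: the exponent is recovered as the order of the root \<open>1\<close>.\<close>

lemma fps_numerator_unique:
  fixes F :: "'a::idom fps"
  assumes "F * (1 - fps_X) ^ m = fps_of_poly p" "poly p 1 \<noteq> 0"
    and "F * (1 - fps_X) ^ n = fps_of_poly q" "poly q 1 \<noteq> 0"
  shows "p = q"
proof -
  let ?L = "[:1, -1:] :: 'a poly"
  have "fps_of_poly (p * ?L ^ n) = F * (1 - fps_X) ^ (m + n)"
    by (simp add: fps_of_poly_mult fps_of_poly_one_minus_X_power power_add assms(1)[symmetric]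
        mult.assoc)
  also have "\<dots> = fps_of_poly (q * ?L ^ m)"
    by (simp add: fps_of_poly_mult fps_of_poly_one_minus_X_power power_add assms(3)[symmetric]
        mult_ac)
  finally have eq: "p * ?L ^ n = q * ?L ^ m" by (simp add: fps_of_poly_eq_iff)
  have "p \<noteq> 0" "q \<noteq> 0" using assms(2,4) by auto
  then have "order 1 (p * ?L ^ n) = n" "order 1 (q * ?L ^ m) = m"
    using assms(2,4) by (simp_all add: order_mult order_0I order_one_minus_X_power)
  with eq have "m = n" by simp
  with eq show "p = q" by simp
qed

lemma pcompose_power_left: "pcompose (p ^ n) q = pcompose p q ^ n"
  by (induction n) (simp_all add: pcompose_mult pcompose_1)

lemma coeff_monom_times_one_minus_X_power:
  "coeff (monom 1 k * [:1, -1:] ^ j) n =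
    (if n < k then 0 else (-1) ^ (n - k) * of_nat (j choose (n - k)) :: 'a::comm_ring_1)"
proof (cases "n - k \<le> j")
  case False
  have "degree ([:1, -1:] ^ j :: 'a poly) \<le> j"
    using degree_power_le[of "[:1, -1::'a:]" j] by simp
  with False show ?thesis by (simp add: coeff_monom_mult coeff_eq_0 binomial_eq_0)
qed (simp add: coeff_monom_mult coeff_linear_poly_power)

lemma degree_eq_Least_top_coeff:
  fixes p :: "'a::zero poly"
  assumes "0 < a"
    and above: "\<And>n. n \<ge> a \<Longrightarrow> coeff p n = 0"
    and below: "\<And>s. s < a \<Longrightarrow> coeff p (a - 1 - s) = D s"
    and top: "D (a - 1) \<noteq> 0"
  shows "degree p = a - (LEAST s. s \<le> a - 1 \<and> D s \<noteq> 0) - 1"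
proof -
  define d where "d = (LEAST s. s \<le> a - 1 \<and> D s \<noteq> 0)"
  have "a - 1 \<le> a - 1 \<and> D (a - 1) \<noteq> 0" using top by simp
  then have d: "d \<le> a - 1 \<and> D d \<noteq> 0" unfolding d_def by (rule LeastI)
  have "d < a" using d \<open>0 < a\<close> by linarith
  then have "coeff p (a - 1 - d) \<noteq> 0" using d below by simp
  moreover have "coeff p i = 0" if "i > a - 1 - d" for i
  proof (cases "i \<ge> a")
    case False
    then have "a - 1 - i < d" using that by linarith
    then have "D (a - 1 - i) = 0" unfolding d_def by (auto dest: not_less_Least)
    moreover have "a - 1 - (a - 1 - i) = i" using False by linarith
    ultimately show ?thesis using below[of "a - 1 - i"] \<open>0 < a\<close> by simp
  qed (rule above)
  ultimately have "degree p = a - 1 - d"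
    by (meson le_degree degree_le le_antisym)
  then show ?thesis by (simp add: d_def)
qed

lemma finite_indep_sets:
  assumes "simple_graph V E"
  shows "finite {S. indep_set V E S}"
proof -
  have "{S. indep_set V E S} \<subseteq> Pow V" by (auto simp: indep_set_def)
  then show ?thesis using assms by (auto simp: simple_graph_def intro: finite_subset)
qed

lemma finite_indep_set:
  assumes "simple_graph V E" "indep_set V E S"
  shows "finite S"
  using assms by (auto simp: simple_graph_def indep_set_def intro: finite_subset)

lemma standard_monomials_eq_UN_indep_sets:
  assumes G: "simple_graph V E"
  shows "standard_monomials V E d = (\<Union>S\<in>{S. indep_set V E S}. exact_support_monomials S d)"
proof (intro equalityI subsetI)
  fix m assume m: "m \<in> standard_monomials V E d"
  let ?S = "{v. m v \<noteq> 0}"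
  have sub: "?S \<subseteq> V" using m by (auto simp: standard_monomials_def)
  then have "indep_set V E ?S"
    using m by (fastforce simp: indep_set_def standard_monomials_def)
  moreover have "(\<Sum>v\<in>?S. m v) = (\<Sum>v\<in>V. m v)"
    using sub G by (intro sum.mono_neutral_left) (auto simp: simple_graph_def)
  then have "m \<in> exact_support_monomials ?S d"
    using m by (auto simp: exact_support_monomials_def standard_monomials_def)
  ultimately show "m \<in> (\<Union>S\<in>{S. indep_set V E S}. exact_support_monomials S d)" by blast
next
  fix m assume "m \<in> (\<Union>S\<in>{S. indep_set V E S}. exact_support_monomials S d)"
  then obtain S where S: "indep_set V E S" and m: "m \<in> exact_support_monomials S d" by blast
  have sub: "S \<subseteq> V" using S by (simp add: indep_set_def)
  have "(\<Sum>v\<in>S. m v) = (\<Sum>v\<in>V. m v)"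
    using sub G m by (intro sum.mono_neutral_left) (auto simp: simple_graph_def exact_support_monomials_def)
  moreover have "\<not> E u v" if "m u \<ge> 1" "m v \<ge> 1" for u v
  proof -
    have "u \<in> S" "v \<in> S" using m that by (auto simp: exact_support_monomials_def)
    then show ?thesis using S by (simp add: indep_set_def)
  qed
  ultimately show "m \<in> standard_monomials V E d"
    using m sub by (auto simp: exact_support_monomials_def standard_monomials_def)
qed

lemma hilbert_function_eq_sum_indep_sets:
  assumes G: "simple_graph V E"
  shows "hilbert_function V E d = (\<Sum>S\<in>{S. indep_set V E S}. card (exact_support_monomials S d))"
  unfolding hilbert_function_def standard_monomials_eq_UN_indep_sets[OF G]
proof (rule card_UN_disjoint)
  show "finite {S. indep_set V E S}" using finite_indep_sets[OF G] .
  show "\<forall>S\<in>{S. indep_set V E S}. finite (exact_support_monomials S d)"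
    using finite_indep_set[OF G] finite_exact_support_monomials by blast
  have "S = {v. m v \<noteq> 0}" if "m \<in> exact_support_monomials S d" for S m
    using that by (force simp: exact_support_monomials_def)
  then show "\<forall>S\<in>{S. indep_set V E S}. \<forall>T\<in>{S. indep_set V E S}. S \<noteq> T \<longrightarrow>
      exact_support_monomials S d \<inter> exact_support_monomials T d = {}"
    by blast
qed

lemma hilbert_series_eq_sum_indep_sets:
  assumes G: "simple_graph V E"
  shows "hilbert_series V E = (\<Sum>S\<in>{S. indep_set V E S}. fps_pos_powers ^ card S)"
proof (rule fps_ext)
  fix d
  have "(\<Sum>S\<in>{S. indep_set V E S}. fps_pos_powers ^ card S) $ d =
      (\<Sum>S\<in>{S. indep_set V E S}. int (card (exact_support_monomials S d)))"
    unfolding fps_sum_nth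
  proof (intro sum.cong refl)
    fix S assume "S \<in> {S. indep_set V E S}"
    then have "finite S" using finite_indep_set[OF G] by blast
    then show "(fps_pos_powers ^ card S) $ d = int (card (exact_support_monomials S d))"
      by (simp flip: fps_card_exact_support_monomials)
  qed
  then show "hilbert_series V E $ d = (\<Sum>S\<in>{S. indep_set V E S}. fps_pos_powers ^ card S) $ d"
    by (simp add: hilbert_series_def hilbert_function_eq_sum_indep_sets[OF G])
qed

lemma card_le_indep_number:
  assumes "simple_graph V E" "indep_set V E S"
  shows "card S \<le> indep_number V E"
  unfolding indep_number_def using assms finite_indep_sets[OF assms(1)] by (intro Max_ge) auto

lemma indep_count_indep_number_pos:
  assumes G: "simple_graph V E"
  shows "indep_count V E (indep_number V E) > 0"
proof -
  have "{} \<in> {S. indep_set V E S}" by (simp add: indep_set_def)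
  then have "indep_number V E \<in> card ` {S. indep_set V E S}"
    unfolding indep_number_def using finite_indep_sets[OF G] by (intro Max_in) auto
  moreover have "finite {S. indep_set V E S \<and> card S = indep_number V E}"
    using finite_indep_sets[OF G] by (rule finite_subset[rotated]) auto
  ultimately show ?thesis unfolding indep_count_def by (auto simp: card_gt_0_iff)
qed

lemma indep_count_0:
  assumes "simple_graph V E"
  shows "indep_count V E 0 = 1"
proof -
  have "{S. indep_set V E S \<and> card S = 0} = {{}}"
    using finite_indep_set[OF assms] by (auto simp: indep_set_def)
  then show ?thesis by (simp add: indep_count_def)
qed

lemma sum_indep_sets_by_card:
  fixes f :: "nat \<Rightarrow> 'b::comm_semiring_1"
  assumes G: "simple_graph V E"
  shows "(\<Sum>S\<in>{S. indep_set V E S}. f (card S)) =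
    (\<Sum>j\<le>indep_number V E. of_nat (indep_count V E j) * f j)"
proof -
  have "(\<Sum>S\<in>{S. indep_set V E S}. f (card S)) =
      (\<Sum>j\<le>indep_number V E. \<Sum>S\<in>{S \<in> {S. indep_set V E S}. card S = j}. f (card S))"
    by (rule sum.group[symmetric]) (use finite_indep_sets[OF G] card_le_indep_number[OF G] in auto)
  also have "\<dots> = (\<Sum>j\<le>indep_number V E. \<Sum>S\<in>{S. indep_set V E S \<and> card S = j}. f j)"
    by (intro sum.cong) auto
  also have "\<dots> = (\<Sum>j\<le>indep_number V E. of_nat (indep_count V E j) * f j)"
    by (simp add: indep_count_def)
  finally show ?thesis .
qed

definition indep_h_poly :: "'a set \<Rightarrow> ('a \<Rightarrow> 'a \<Rightarrow> bool) \<Rightarrow> int poly" where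
  "indep_h_poly V E =
     (\<Sum>S\<in>{S. indep_set V E S}. monom 1 (card S) * [:1, -1:] ^ (indep_number V E - card S))"

definition indep_h_poly_mirror :: "'a set \<Rightarrow> ('a \<Rightarrow> 'a \<Rightarrow> bool) \<Rightarrow> int poly" where
  "indep_h_poly_mirror V E =
     (\<Sum>S\<in>{S. indep_set V E S}. monom 1 (indep_number V E - card S) * [:1, -1:] ^ card S)"

lemma hilbert_series_times_one_minus_X_power:
  assumes G: "simple_graph V E"
  shows "hilbert_series V E * (1 - fps_X) ^ indep_number V E = fps_of_poly (indep_h_poly V E)"
proof -
  have "fps_pos_powers ^ card S * (1 - fps_X) ^ indep_number V E =
      fps_of_poly (monom 1 (card S) * [:1, -1:] ^ (indep_number V E - card S))"
    if "indep_set V E S" for S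
  proof -
    have "fps_pos_powers ^ card S * (1 - fps_X) ^ indep_number V E =
        (fps_pos_powers * (1 - fps_X)) ^ card S * (1 - fps_X) ^ (indep_number V E - card S)"
      using card_le_indep_number[OF G that]
      by (simp add: power_mult_distrib mult.assoc flip: power_add)
    then show ?thesis
      by (simp add: fps_pos_powers_times_one_minus_X fps_of_poly_mult fps_of_poly_monom'
          fps_of_poly_one_minus_X_power)
  qed
  then have "(\<Sum>S\<in>{S. indep_set V E S}. fps_pos_powers ^ card S * (1 - fps_X) ^ indep_number V E) =
      (\<Sum>S\<in>{S. indep_set V E S}.
         fps_of_poly (monom 1 (card S) * [:1, -1:] ^ (indep_number V E - card S)))"
    by (intro sum.cong) auto
  then show ?thesis
    by (simp add: hilbert_series_eq_sum_indep_sets[OF G] sum_distrib_right indep_h_poly_def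
        fps_of_poly_sum)
qed

lemma poly_indep_h_poly_1:
  assumes G: "simple_graph V E"
  shows "poly (indep_h_poly V E) 1 = int (indep_count V E (indep_number V E))"
proof -
  have "poly (indep_h_poly V E) 1 = (\<Sum>S\<in>{S. indep_set V E S}. (0::int) ^ (indep_number V E - card S))"
    by (simp add: indep_h_poly_def poly_sum poly_monom)
  also have "\<dots> = (\<Sum>j\<le>indep_number V E. of_nat (indep_count V E j) * (0::int) ^ (indep_number V E - j))"
    by (rule sum_indep_sets_by_card[OF G])
  also have "\<dots> = (\<Sum>j\<le>indep_number V E. if j = indep_number V E then int (indep_count V E j) else 0)"
    by (intro sum.cong) auto
  also have "\<dots> = int (indep_count V E (indep_number V E))"
    by simp
  finally show ?thesis .
qed

lemma h_polynomial_eq_indep_h_poly: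
  assumes G: "simple_graph V E"
  shows "h_polynomial V E = indep_h_poly V E"
  unfolding h_polynomial_def
proof (rule the_equality)
  have nz: "poly (indep_h_poly V E) 1 \<noteq> 0"
    using poly_indep_h_poly_1[OF G] indep_count_indep_number_pos[OF G] by simp
  then show "\<exists>D. hilbert_series V E * (1 - fps_X) ^ D = fps_of_poly (indep_h_poly V E)
      \<and> poly (indep_h_poly V E) 1 \<noteq> 0"
    using hilbert_series_times_one_minus_X_power[OF G] by blast
  show "p = indep_h_poly V E"
    if "\<exists>D. hilbert_series V E * (1 - fps_X) ^ D = fps_of_poly p \<and> poly p 1 \<noteq> 0" for p
    using that fps_numerator_unique[OF _ _ hilbert_series_times_one_minus_X_power[OF G] nz]
    by blast
qed

lemma indep_h_poly_eq_pcompose_mirror: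
  "indep_h_poly V E = pcompose (indep_h_poly_mirror V E) [:1, -1:]"
proof -
  have "pcompose [:1, -1::int:] [:1, -1:] = [:0, 1:]" "pcompose [:0, 1::int:] [:1, -1:] = [:1, -1:]"
    by (simp_all add: pcompose_pCons)
  then show ?thesis
    unfolding indep_h_poly_def indep_h_poly_mirror_def pcompose_sum
    by (simp add: pcompose_mult pcompose_power_left monom_altdef mult.commute)
qed

lemma degree_indep_h_poly: "degree (indep_h_poly V E) = degree (indep_h_poly_mirror V E)"
  by (simp add: indep_h_poly_eq_pcompose_mirror degree_pcompose)

lemma coeff_indep_h_poly_mirror:
  assumes G: "simple_graph V E"
  shows "coeff (indep_h_poly_mirror V E) n =
    (\<Sum>j\<le>indep_number V E. int (indep_count V E j) *
      (if n < indep_number V E - j then 0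
       else (-1) ^ (n - (indep_number V E - j)) * int (j choose (n - (indep_number V E - j)))))"
proof -
  let ?c = "\<lambda>j. if n < indep_number V E - j then 0
    else (-1) ^ (n - (indep_number V E - j)) * int (j choose (n - (indep_number V E - j)))"
  have "coeff (indep_h_poly_mirror V E) n = (\<Sum>S\<in>{S. indep_set V E S}. ?c (card S))"
    by (simp add: indep_h_poly_mirror_def coeff_sum coeff_monom_times_one_minus_X_power)
  also have "\<dots> = (\<Sum>j\<le>indep_number V E. int (indep_count V E j) * ?c j)"
    by (rule sum_indep_sets_by_card[OF G])
  finally show ?thesis .
qed

lemma coeff_indep_h_poly_mirror_below:
  assumes G: "simple_graph V E" and "s < indep_number V E"
  shows "coeff (indep_h_poly_mirror V E) (indep_number V E - 1 - s) =
    (\<Sum>j=s+1..indep_number V E.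
       (-1::int) ^ (j - 1 - s) * int (indep_count V E j) * int (j choose (j - 1 - s)))"
  unfolding coeff_indep_h_poly_mirror[OF G]
  using assms(2) by (intro sum.mono_neutral_cong_right) auto

lemma coeff_indep_h_poly_mirror_above:
  assumes G: "simple_graph V E"
    and g: "(\<Sum>j=1..indep_number V E. (-1::int) ^ (j - 1) * int (indep_count V E j)) = 1"
    and n: "indep_number V E \<le> n"
  shows "coeff (indep_h_poly_mirror V E) n = 0"
proof (cases "n = indep_number V E")
  case True
  let ?\<alpha> = "indep_number V E"
  have "coeff (indep_h_poly_mirror V E) ?\<alpha> = (\<Sum>j\<le>?\<alpha>. int (indep_count V E j) * (-1) ^ j)"
    unfolding coeff_indep_h_poly_mirror[OF G] by (intro sum.cong) auto
  also have "\<dots> = int (indep_count V E 0) + (\<Sum>j=1..?\<alpha>. int (indep_count V E j) * (-1) ^ j)"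
    by (simp add: atMost_atLeast0 sum.atLeast_Suc_atMost)
  also have "(\<Sum>j=1..?\<alpha>. int (indep_count V E j) * (-1) ^ j) =
      - (\<Sum>j=1..?\<alpha>. (-1) ^ (j - 1) * int (indep_count V E j))"
    unfolding sum_negf[symmetric] by (intro sum.cong) (auto simp: power_eq_if)
  finally show ?thesis using True g indep_count_0[OF G] by simp
next
  case False
  then show ?thesis
    unfolding coeff_indep_h_poly_mirror[OF G] using n by (intro sum.neutral) auto
qed

theorem corollary3p4:
  fixes V :: "'a set" and E :: "'a \<Rightarrow> 'a \<Rightarrow> bool"
  assumes "simple_graph V E"
    and "(\<Sum>j=1..indep_number V E. (-1::int) ^ (j - 1) * int (indep_count V E j)) = 1"
  shows "degree (h_polynomial V E) =
    indep_number V E -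
      (LEAST s. s \<le> indep_number V E - 1 \<and>
         (\<Sum>j=s+1..indep_number V E.
            (-1::int) ^ (j - 1 - s) * int (indep_count V E j) * int (j choose (j - 1 - s))) \<noteq> 0)
    - 1"
proof -
  note G = assms(1)
  let ?\<alpha> = "indep_number V E"
  have "degree (h_polynomial V E) = degree (indep_h_poly_mirror V E)"
    by (simp add: h_polynomial_eq_indep_h_poly[OF G] degree_indep_h_poly)
  also have "\<dots> = ?\<alpha> - (LEAST s. s \<le> ?\<alpha> - 1 \<and> (\<Sum>j=s+1..?\<alpha>.
      (-1::int) ^ (j - 1 - s) * int (indep_count V E j) * int (j choose (j - 1 - s))) \<noteq> 0) - 1"
  proof (rule degree_eq_Least_top_coeff)
    show "0 < ?\<alpha>" using assms(2) by (rule contrapos_pp) simp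
    then show "(\<Sum>j=?\<alpha> - 1 + 1..?\<alpha>. (-1::int) ^ (j - 1 - (?\<alpha> - 1)) * int (indep_count V E j)
        * int (j choose (j - 1 - (?\<alpha> - 1)))) \<noteq> 0"
      using indep_count_indep_number_pos[OF G] by simp
  qed (use coeff_indep_h_poly_mirror_below[OF G] coeff_indep_h_poly_mirror_above[OF G assms(2)] in auto)
  finally show ?thesis .
qed

end
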